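(* Suppose $p\in[1,2)$, $\rho>0$ and $\mathbb{P}_\circ\in\mathscr{Q}_p$. Then $\varphi(X)=+\infty$ for every $X\in\mathcal{O}^{d,r}$.
   Context: Let $d,r$ be integers with $1\le r<d$ and $\mathcal{O}^{d,r}=\{X\in\mathbb{R}^{d\times r}: X^\top X=I_r\}$. For $p\ge 1$, $\mathscr{Q}_p$ denotes the set of Borel probability distributions $\mathbb{P}$ on $\mathbb{R}^d$ with $\mathbb{E}_{\mathbb{P}}\|\xi\|^p<\infty$. For $\mathbb{P}_1,\mathbb{P}_2\in\mathscr{Q}_p$ the type-$p$ Wasserstein distance is $\mathbb{W}_p(\mathbb{P}_1,\mathbb{P}_2)=\inf_{\mathbb{Q}\in\mathscr{J}(\mathbb{P}_1,\mathbb{P}_2)}\big(\mathbb{E}_{(\xi_1,\xi_2)\sim\mathbb{Q}}\|\xi_1-\xi_2\|_p^p\big)^{1/p}$, where $\mathscr{J}(\mathbb{P}_1,\mathbb{P}_2)$ is the set of joint distributions with marginals $\mathbb{P}_1,\mathbb{P}_2$ and $\|\cdot\|_p$ is the $\ell_p$ norm on $\mathbb{R}^d$. For $X\in\mathcal{O}^{d,r}$, $\varphi(X)=\sup\{\mathbb{E}_{\mathbb{P}}\big[\|(I_d-XX^\top)(\xi-\mathbb{E}_{\mathbb{P}}[\xi])\|_2^2\big]:\mathbb{P}\in\mathscr{Q}_p,\ \mathbb{W}_p(\mathbb{P},\mathbb{P}_\circ)\le\rho\}$. *)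

theory Defs
  imports "HOL-Probability.Probability"
begin

definition lpnorm :: "real \<Rightarrow> real ^ 'd \<Rightarrow> real" where
  "lpnorm p x = (\<Sum>i\<in>UNIV. \<bar>x $ i\<bar> powr p) powr (1 / p)"

definition Qp :: "real \<Rightarrow> (real ^ 'd) measure set" where
  "Qp p = {P. prob_space P \<and> sets P = sets borel \<and>
              (\<integral>\<^sup>+ x. ennreal (norm x powr p) \<partial>P) < \<infinity>}"

definition couplings :: "(real ^ 'd) measure \<Rightarrow> (real ^ 'd) measure
    \<Rightarrow> ((real ^ 'd) \<times> (real ^ 'd)) measure set" where
  "couplings P1 P2 = {Q. prob_space Q \<and> sets Q = sets borel \<and>
                         distr Q borel fst = P1 \<and> distr Q borel snd = P2}"

definition wasserstein :: "real \<Rightarrow> (real ^ 'd) measure \<Rightarrow> (real ^ 'd) measure \<Rightarrow> real" where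
  "wasserstein p P1 P2 =
     enn2real (INF Q\<in>couplings P1 P2.
        \<integral>\<^sup>+ z. ennreal (lpnorm p (fst z - snd z) powr p) \<partial>Q) powr (1 / p)"

definition phi :: "real \<Rightarrow> real \<Rightarrow> (real ^ 'd) measure \<Rightarrow> real ^ 'r ^ 'd \<Rightarrow> ennreal" where
  "phi p \<rho> P0 X =
     (SUP P\<in>{P\<in>Qp p. wasserstein p P P0 \<le> \<rho>}.
        \<integral>\<^sup>+ \<xi>. ennreal ((norm ((mat 1 - X ** transpose X) *v (\<xi> - integral\<^sup>L P (\<lambda>x. x))))\<^sup>2) \<partial>P)"

end

theory Submission
  imports Defs "HOL-Real_Asymp.Multiseries_Expansion"
begin

(* Since r < d, some v \<noteq> 0 satisfies X\<^sup>T v = 0, so I - X X\<^sup>T fixes v. Move a fraction e of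
   the mass of P\<^sub>0 by +t v and by -t v (half each). The obvious coupling has transport cost
   e t\<^sup>p |v|\<^sub>p\<^sup>p, so e = (\<rho> / (t |v|\<^sub>p))\<^sup>p keeps the new law in the Wasserstein ball, while
   by the parallelogram law its residual variance is at least e t\<^sup>2 |v|\<^sup>2, a constant times
   t\<^bsup>2-p\<^esup>. As p < 2 this is unbounded in t. *)

lemma lpnorm_zero [simp]: "lpnorm p 0 = 0"
  by (simp add: lpnorm_def)

lemma lpnorm_scaleR:
  assumes "0 < p"
  shows "lpnorm p (c *\<^sub>R x) = \<bar>c\<bar> * lpnorm p x"
proof -
  have "lpnorm p (c *\<^sub>R x)
      = (\<bar>c\<bar> powr p * (\<Sum>i\<in>UNIV. \<bar>x $ i\<bar> powr p)) powr (1 / p)"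
    by (simp add: lpnorm_def abs_mult powr_mult sum_distrib_left)
  also have "\<dots> = \<bar>c\<bar> * lpnorm p x"
    using assms by (simp add: lpnorm_def powr_mult sum_nonneg powr_powr)
  finally show ?thesis .
qed

lemma lpnorm_nonneg: "0 \<le> lpnorm p x"
  by (simp add: lpnorm_def)

lemma lpnorm_uminus [simp]: "lpnorm p (- x) = lpnorm p x"
  by (simp add: lpnorm_def)

lemma lpnorm_pos:
  assumes "x \<noteq> 0"
  shows "0 < lpnorm p x"
proof -
  obtain i where "x $ i \<noteq> 0"
    using assms by (metis vec_eq_iff zero_index)
  then have "0 < (\<Sum>j\<in>UNIV. \<bar>x $ j\<bar> powr p)"
    by (intro sum_pos2[of UNIV i]) auto
  then show ?thesis
    by (simp add: lpnorm_def)
qed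

lemma borel_measurable_lpnorm [measurable]:
  "lpnorm p \<in> borel_measurable (borel :: (real ^ 'd) measure)"
  unfolding lpnorm_def by measurable

lemma borel_measurable_matrix_vector_mult [measurable]:
  fixes A :: "real ^ 'n ^ 'm"
  shows "(*v) A \<in> borel_measurable borel"
  by (intro borel_measurable_continuous_onI continuous_intros)

lemma powr_add_le:
  fixes a b p :: real
  assumes "0 \<le> a" "0 \<le> b" "0 \<le> p"
  shows "(a + b) powr p \<le> 2 powr p * (a powr p + b powr p)"
proof -
  have "(a + b) powr p \<le> (2 * max a b) powr p"
    using assms by (intro powr_mono2) auto
  also have "\<dots> = 2 powr p * max a b powr p"
    using assms by (simp add: powr_mult)
  also have "\<dots> \<le> 2 powr p * (a powr p + b powr p)"
    by (intro mult_left_mono) (auto simp: max_def)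
  finally show ?thesis .
qed

(* A junk pmf unless 0 \<le> e \<le> 1; the lemmas computing with it assume this. *)
definition sym_three_point_pmf :: "real \<Rightarrow> real pmf" where
  "sym_three_point_pmf e =
     embed_pmf (\<lambda>s. if s = 1 \<or> s = -1 then e / 2 else if s = 0 then 1 - e else 0)"

lemma nn_integral_sym_three_point_pmf:
  assumes "0 \<le> e" "e \<le> 1"
  shows "(\<integral>\<^sup>+ s. h s \<partial>sym_three_point_pmf e)
           = ennreal (1 - e) * h 0 + ennreal (e / 2) * (h 1 + h (-1))"
proof -
  define f :: "real \<Rightarrow> real" where
    "f s = (if s = 1 \<or> s = -1 then e / 2 else if s = 0 then 1 - e else 0)" for s
  have f_nonneg: "0 \<le> f s" for s
    using assms by (simp add: f_def)
  have "(\<integral>\<^sup>+ s. ennreal (f s) \<partial>count_space UNIV) = (\<Sum>s\<in>{-1, 0, 1}. ennreal (f s))"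
    by (rule nn_integral_count_space') (auto simp: f_def)
  also have "\<dots> = 1"
    using f_nonneg by (simp add: f_def flip: ennreal_plus)
  finally have pmf_eq: "pmf (sym_three_point_pmf e) s = f s" for s
    unfolding sym_three_point_pmf_def f_def[symmetric] using f_nonneg by (intro pmf_embed_pmf)
  have "set_pmf (sym_three_point_pmf e) \<subseteq> {-1, 0, 1}"
    by (auto simp: set_pmf_iff pmf_eq f_def split: if_splits)
  then have "(\<integral>\<^sup>+ s. h s \<partial>sym_three_point_pmf e)
      = (\<Sum>s\<in>{-1, 0, 1}. h s * pmf (sym_three_point_pmf e) s)"
    by (intro nn_integral_measure_pmf_support) auto
  also have "\<dots> = ennreal (1 - e) * h 0 + ennreal (e / 2) * (h 1 + h (-1))"
    by (simp add: pmf_eq f_def algebra_simps)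
  finally show ?thesis .
qed

lemma borel_measurable_fst [measurable]:
  "fst \<in> borel_measurable (borel :: ('a::topological_space \<times> 'b::topological_space) measure)"
  by (intro borel_measurable_continuous_onI continuous_intros)

lemma borel_measurable_snd [measurable]:
  "snd \<in> borel_measurable (borel :: ('a::topological_space \<times> 'b::topological_space) measure)"
  by (intro borel_measurable_continuous_onI continuous_intros)

definition three_point_shift_coupling ::
    "'a measure \<Rightarrow> real \<Rightarrow> 'a \<Rightarrow> ('a \<times> 'a::euclidean_space) measure"
  where "three_point_shift_coupling P e w =
     distr (P \<Otimes>\<^sub>M sym_three_point_pmf e) borel (\<lambda>(x, s). (x + s *\<^sub>R w, x))"

definition three_point_shift :: "'a measure \<Rightarrow> real \<Rightarrow> 'a \<Rightarrow> 'a::euclidean_space measure"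
  where "three_point_shift P e w = distr (three_point_shift_coupling P e w) borel fst"

context
  fixes P :: "'a::euclidean_space measure"
  assumes P: "prob_space P" "sets P = sets borel"
begin

lemma measurable_three_point_shift_pair [measurable]:
  "(\<lambda>(x, s). (x + s *\<^sub>R w, x)) \<in> borel_measurable (P \<Otimes>\<^sub>M measure_pmf K)"
proof -
  have [measurable]: "fst \<in> borel_measurable (P \<Otimes>\<^sub>M measure_pmf K)"
    using measurable_fst[of P "measure_pmf K"] measurable_cong_sets[OF refl P(2)] by blast
  have [measurable]: "snd \<in> borel_measurable (P \<Otimes>\<^sub>M measure_pmf K)"
    by (rule measurable_compose[OF measurable_snd]) simp
  show ?thesis
    by (simp add: case_prod_beta')
qed

lemma measurable_three_point_shift_coupling_eq [simp]:
  "measurable (three_point_shift_coupling P e w) N = measurable borel N"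
  by (rule measurable_cong_sets) (simp_all add: three_point_shift_coupling_def)

lemma prob_space_three_point_shift_coupling: "prob_space (three_point_shift_coupling P e w)"
  unfolding three_point_shift_coupling_def
  by (intro prob_space.prob_space_distr prob_space_pair P(1) prob_space_measure_pmf) simp

lemma nn_integral_three_point_shift_coupling:
  assumes "0 \<le> e" "e \<le> 1" and f: "f \<in> borel_measurable borel"
  shows "(\<integral>\<^sup>+ z. f z \<partial>three_point_shift_coupling P e w)
           = (\<integral>\<^sup>+ x. ennreal (1 - e) * f (x, x)
                  + ennreal (e / 2) * (f (x + w, x) + f (x - w, x)) \<partial>P)"
proof -
  have "(\<integral>\<^sup>+ z. f z \<partial>three_point_shift_coupling P e w)
      = (\<integral>\<^sup>+ x. \<integral>\<^sup>+ s. f (x + s *\<^sub>R w, x) \<partial>sym_three_point_pmf e \<partial>P)"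
    unfolding three_point_shift_coupling_def
    using measure_pmf.nn_integral_fst[of "\<lambda>(x, s). f (x + s *\<^sub>R w, x)" P]
      measurable_compose[OF measurable_three_point_shift_pair f]
    by (simp add: nn_integral_distr f case_prod_beta')
  then show ?thesis
    by (simp add: nn_integral_sym_three_point_pmf assms)
qed

lemma distr_snd_three_point_shift_coupling:
  "distr (three_point_shift_coupling P e w) borel snd = P"
proof -
  have "distr (three_point_shift_coupling P e w) borel snd
      = distr (P \<Otimes>\<^sub>M sym_three_point_pmf e) borel fst"
    unfolding three_point_shift_coupling_def
    by (subst distr_distr) (simp_all add: borel_measurable_snd comp_def case_prod_beta')
  also have "\<dots> = distr (P \<Otimes>\<^sub>M sym_three_point_pmf e) P fst"
    by (rule distr_cong) (simp_all add: P(2))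
  also have "\<dots> = P"
    by (rule measure_pmf.distr_pair_fst)
  finally show ?thesis .
qed

lemma prob_space_three_point_shift: "prob_space (three_point_shift P e w)"
  unfolding three_point_shift_def
  by (intro prob_space.prob_space_distr prob_space_three_point_shift_coupling)
    (simp add: borel_measurable_fst)

lemma nn_integral_three_point_shift:
  assumes "0 \<le> e" "e \<le> 1" and f: "f \<in> borel_measurable borel"
  shows "(\<integral>\<^sup>+ y. f y \<partial>three_point_shift P e w)
           = (\<integral>\<^sup>+ x. ennreal (1 - e) * f x + ennreal (e / 2) * (f (x + w) + f (x - w)) \<partial>P)"
  unfolding three_point_shift_def
  using nn_integral_three_point_shift_coupling[OF assms(1,2)
      measurable_compose[OF borel_measurable_fst f]]
  by (simp add: nn_integral_distr f)

end

lemma ennreal_half_mult_double: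
  assumes "0 \<le> e"
  shows "ennreal (e / 2) * (a + a) = ennreal e * a"
  using assms
  by (simp add: mult_2[symmetric] mult.assoc[symmetric] ennreal_mult'[symmetric]
      ennreal_numeral[symmetric] del: ennreal_numeral)

lemma ennreal_three_point_combination_le:
  fixes a b c y :: ennreal
  assumes "0 \<le> e" "e \<le> 1" "a \<le> y" "b \<le> y" "c \<le> y"
  shows "ennreal (1 - e) * a + ennreal (e / 2) * (b + c) \<le> y"
proof -
  have "ennreal (1 - e) * a + ennreal (e / 2) * (b + c)
      \<le> ennreal (1 - e) * y + ennreal (e / 2) * (y + y)"
    using assms by (intro add_mono mult_left_mono) auto
  also have "\<dots> = (ennreal (1 - e) + ennreal e) * y"
    using assms by (simp add: ennreal_half_mult_double distrib_right)
  also have "\<dots> = y"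
    using assms by (simp flip: ennreal_plus)
  finally show ?thesis .
qed

lemma three_point_shift_in_Qp:
  fixes P :: "(real ^ 'd) measure"
  assumes P: "P \<in> Qp p" and "0 \<le> p" "0 \<le> e" "e \<le> 1"
  shows "three_point_shift P e w \<in> Qp p"
proof -
  have P_prob: "prob_space P" and P_sets: "sets P = sets borel"
    and P_moment: "(\<integral>\<^sup>+ x. ennreal (norm x powr p) \<partial>P) < \<infinity>"
    using P by (auto simp: Qp_def)
  interpret P: prob_space P by (rule P_prob)
  define B where "B x = 2 powr p * (norm x powr p + norm w powr p)" for x :: "real ^ 'd"
  have shift_bound: "norm (x + u) powr p \<le> B x" if "norm u \<le> norm w" for u x
  proof -
    have "norm (x + u) powr p \<le> (norm x + norm w) powr p"
      using that norm_triangle_ineq[of x u] \<open>0 \<le> p\<close> by (intro powr_mono2) auto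
    also have "\<dots> \<le> B x"
      unfolding B_def using \<open>0 \<le> p\<close> by (intro powr_add_le) auto
    finally show ?thesis .
  qed
  have moment_measurable: "(\<lambda>y. ennreal (norm y powr p)) \<in> borel_measurable borel"
    by measurable
  have "(\<integral>\<^sup>+ y. ennreal (norm y powr p) \<partial>three_point_shift P e w)
      \<le> (\<integral>\<^sup>+ x. ennreal (B x) \<partial>P)"
    unfolding nn_integral_three_point_shift[OF P_prob P_sets assms(3,4) moment_measurable]
    using shift_bound[of 0] shift_bound[of w] shift_bound[of "- w"]
    by (intro nn_integral_mono ennreal_three_point_combination_le assms ennreal_leI) auto
  also have "\<dots>
      = ennreal (2 powr p) * ((\<integral>\<^sup>+ x. ennreal (norm x powr p) \<partial>P) + ennreal (norm w powr p))"
  proof -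
    have [measurable]: "(\<lambda>x. norm x powr p) \<in> borel_measurable P"
      using P_sets by (simp cong: measurable_cong_sets)
    have "(\<integral>\<^sup>+ x. ennreal (norm x powr p) + ennreal (norm w powr p) \<partial>P)
        = (\<integral>\<^sup>+ x. ennreal (norm x powr p) \<partial>P) + ennreal (norm w powr p)"
      by (subst nn_integral_add) (auto simp: P.emeasure_space_1)
    then show ?thesis
      unfolding B_def by (simp add: ennreal_mult ennreal_plus nn_integral_cmult)
  qed
  also have "\<dots> < \<infinity>"
    using P_moment by (simp add: ennreal_mult_less_top)
  finally show ?thesis
    using prob_space_three_point_shift[OF P_prob P_sets]
    by (simp add: Qp_def three_point_shift_def three_point_shift_coupling_def)
qed

lemma wasserstein_three_point_shift_le:
  fixes P :: "(real ^ 'd) measure"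
  assumes P: "P \<in> Qp p" and "0 < p" "0 \<le> e" "e \<le> 1"
  shows "wasserstein p (three_point_shift P e w) P \<le> e powr (1 / p) * lpnorm p w"
proof -
  have P_prob: "prob_space P" and P_sets: "sets P = sets borel"
    using P by (auto simp: Qp_def)
  interpret P: prob_space P by (rule P_prob)
  let ?C = "three_point_shift_coupling P e w"
  let ?cost = "\<lambda>Q. \<integral>\<^sup>+ z. ennreal (lpnorm p (fst z - snd z) powr p) \<partial>Q"
  let ?c = "lpnorm p w powr p"
  have coupling: "?C \<in> couplings (three_point_shift P e w) P"
    using prob_space_three_point_shift_coupling[OF P_prob P_sets]
      distr_snd_three_point_shift_coupling[OF P_prob P_sets]
    by (simp add: couplings_def three_point_shift_def three_point_shift_coupling_def)
  have cost_measurable: "(\<lambda>z. ennreal (lpnorm p (fst z - snd z) powr p)) \<in> borel_measurable borel"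
    by measurable
  have "?cost ?C = (\<integral>\<^sup>+ x. ennreal (e / 2) * (ennreal ?c + ennreal ?c) \<partial>P)"
    unfolding nn_integral_three_point_shift_coupling[OF P_prob P_sets assms(3,4) cost_measurable]
    by (intro nn_integral_cong) simp
  also have "\<dots> = ennreal (e * ?c)"
    using \<open>0 \<le> e\<close> by (simp add: P.emeasure_space_1 ennreal_half_mult_double ennreal_mult')
  finally have "(INF Q\<in>couplings (three_point_shift P e w) P. ?cost Q) \<le> ennreal (e * ?c)"
    using INF_lower[OF coupling, of ?cost] by simp
  then have "enn2real (INF Q\<in>couplings (three_point_shift P e w) P. ?cost Q) \<le> e * ?c"
    using \<open>0 \<le> e\<close> by (simp add: enn2real_leI)
  then have "wasserstein p (three_point_shift P e w) P \<le> (e * ?c) powr (1 / p)"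
    unfolding wasserstein_def using \<open>0 < p\<close> by (intro powr_mono2) auto
  also have "\<dots> = e powr (1 / p) * lpnorm p w"
    using \<open>0 < p\<close> \<open>0 \<le> e\<close> lpnorm_nonneg[of p w] by (simp add: powr_mult powr_powr)
  finally show ?thesis .
qed

lemma residual_three_point_average:
  fixes b c :: "'a::real_inner"
  shows "(1 - e) * (norm b)\<^sup>2 + e / 2 * ((norm (b + c))\<^sup>2 + (norm (b - c))\<^sup>2)
           = (norm b)\<^sup>2 + e * (norm c)\<^sup>2"
  by (simp add: power2_norm_eq_inner inner_add_left inner_add_right inner_diff_left
      inner_diff_right inner_commute algebra_simps)

(* The symmetric split makes the cross terms with the centring m cancel, so the bound holds for
   every m, in particular for the mean of the shifted law itself. *)
lemma nn_integral_residual_three_point_shift_ge: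
  fixes P :: "(real ^ 'd) measure" and A :: "real ^ 'd ^ 'k"
  assumes P: "prob_space P" "sets P = sets borel" and "0 \<le> e" "e \<le> 1"
  shows "ennreal (e * (norm (A *v w))\<^sup>2)
           \<le> (\<integral>\<^sup>+ y. ennreal ((norm (A *v (y - m)))\<^sup>2) \<partial>three_point_shift P e w)"
proof -
  interpret P: prob_space P by (rule P(1))
  define r where "r y = ennreal ((norm (A *v (y - m)))\<^sup>2)" for y
  have r_measurable: "r \<in> borel_measurable borel"
    unfolding r_def by measurable
  have pointwise: "ennreal (e * (norm (A *v w))\<^sup>2)
      \<le> ennreal (1 - e) * r x + ennreal (e / 2) * (r (x + w) + r (x - w))" for x
  proof -
    define b c where "b = A *v (x - m)" and "c = A *v w"
    have "A *v (x + w - m) = b + c" "A *v (x - w - m) = b - c"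
      by (simp_all add: b_def c_def algebra_simps matrix_vector_right_distrib
          matrix_vector_mult_diff_distrib)
    then show ?thesis
      using residual_three_point_average[of e b c] \<open>0 \<le> e\<close> \<open>e \<le> 1\<close>
      by (simp add: r_def b_def [symmetric] c_def [symmetric] flip: ennreal_mult' ennreal_plus)
  qed
  have "ennreal (e * (norm (A *v w))\<^sup>2) = (\<integral>\<^sup>+ x. ennreal (e * (norm (A *v w))\<^sup>2) \<partial>P)"
    by (simp add: P.emeasure_space_1)
  also have "\<dots> \<le> (\<integral>\<^sup>+ x. ennreal (1 - e) * r x + ennreal (e / 2) * (r (x + w) + r (x - w)) \<partial>P)"
    using pointwise by (intro nn_integral_mono)
  also have "\<dots> = (\<integral>\<^sup>+ y. r y \<partial>three_point_shift P e w)"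
    by (rule nn_integral_three_point_shift[OF P assms(3,4) r_measurable, symmetric])
  finally show ?thesis
    unfolding r_def .
qed

lemma phi_ge_three_point_shift:
  fixes X :: "real ^ 'r ^ 'd"
  assumes P0: "P0 \<in> Qp p" and "0 < p" "0 \<le> e" "e \<le> 1"
    and radius: "e powr (1 / p) * lpnorm p w \<le> \<rho>"
  shows "ennreal (e * (norm ((mat 1 - X ** transpose X) *v w))\<^sup>2) \<le> phi p \<rho> P0 X"
proof -
  let ?A = "mat 1 - X ** transpose X"
  let ?P = "three_point_shift P0 e w"
  have "?P \<in> Qp p"
    using P0 assms(2-4) by (intro three_point_shift_in_Qp) auto
  moreover have "wasserstein p ?P P0 \<le> \<rho>"
    using wasserstein_three_point_shift_le[OF P0 assms(2-4)] radius by (rule order_trans)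
  ultimately have "(\<integral>\<^sup>+ \<xi>. ennreal ((norm (?A *v (\<xi> - integral\<^sup>L ?P (\<lambda>x. x))))\<^sup>2) \<partial>?P)
      \<le> phi p \<rho> P0 X"
    unfolding phi_def by (intro SUP_upper) simp
  moreover have "prob_space P0" "sets P0 = sets borel"
    using P0 by (auto simp: Qp_def)
  then have "ennreal (e * (norm (?A *v w))\<^sup>2)
      \<le> (\<integral>\<^sup>+ \<xi>. ennreal ((norm (?A *v (\<xi> - integral\<^sup>L ?P (\<lambda>x. x))))\<^sup>2) \<partial>?P)"
    using assms(3,4) by (rule nn_integral_residual_three_point_shift_ge)
  ultimately show ?thesis
    by (rule order_trans[rotated])
qed

lemma phi_ge_powr_along_kernel:
  fixes X :: "real ^ 'r ^ 'd"
  assumes P0: "P0 \<in> Qp p" and "0 < p" "0 < \<rho>"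
    and kernel: "transpose X *v v = 0" "v \<noteq> 0" and t: "\<rho> \<le> t * lpnorm p v"
  shows "ennreal (\<rho> powr p * (norm v)\<^sup>2 / lpnorm p v powr p * t powr (2 - p)) \<le> phi p \<rho> P0 X"
proof -
  define L where "L = lpnorm p v"
  have "0 < L"
    unfolding L_def using kernel(2) by (rule lpnorm_pos)
  have "0 < t"
    using t \<open>0 < \<rho>\<close> \<open>0 < L\<close> zero_less_mult_pos2[of t L] by (simp add: L_def)
  define e where "e = (\<rho> / (t * L)) powr p"
  have "0 \<le> e" "e \<le> 1"
    using t \<open>0 < p\<close> \<open>0 < \<rho>\<close> \<open>0 < t\<close> \<open>0 < L\<close> by (auto simp: e_def L_def intro!: powr_le1)
  have "e powr (1 / p) = \<rho> / (t * L)"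
    using \<open>0 < p\<close> \<open>0 < \<rho>\<close> \<open>0 < t\<close> \<open>0 < L\<close> by (simp add: e_def powr_powr)
  moreover have "lpnorm p (t *\<^sub>R v) = t * L"
    using \<open>0 < p\<close> \<open>0 < t\<close> by (simp add: lpnorm_scaleR L_def)
  ultimately have radius: "e powr (1 / p) * lpnorm p (t *\<^sub>R v) = \<rho>"
    using \<open>0 < t\<close> \<open>0 < L\<close> by simp
  have fixed: "(mat 1 - X ** transpose X) *v (t *\<^sub>R v) = t *\<^sub>R v"
    using kernel(1)
    by (simp add: matrix_vector_mult_diff_rdistrib matrix_vector_mul_assoc[symmetric]
        matrix_vector_mult_scaleR)
  have "e * (norm (t *\<^sub>R v))\<^sup>2 = \<rho> powr p * (norm v)\<^sup>2 / L powr p * (t powr 2 / t powr p)"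
    using \<open>0 < \<rho>\<close> \<open>0 < t\<close> \<open>0 < L\<close>
    by (simp add: e_def powr_divide powr_mult power_mult_distrib powr_realpow ac_simps)
  also have "\<dots> = \<rho> powr p * (norm v)\<^sup>2 / lpnorm p v powr p * t powr (2 - p)"
    by (simp add: L_def powr_diff)
  finally show ?thesis
    using phi_ge_three_point_shift[OF P0 \<open>0 < p\<close> \<open>0 \<le> e\<close> \<open>e \<le> 1\<close>, of "t *\<^sub>R v" \<rho> X]
      radius fixed
    by simp
qed

lemma ennreal_eq_top_if_eventually_ge:
  fixes y :: ennreal
  assumes "filterlim f at_top F" "eventually (\<lambda>x. ennreal (f x) \<le> y) F" "F \<noteq> bot"
  shows "y = \<infinity>"
proof -
  have "of_nat n \<le> y" for n
  proof -
    have "eventually (\<lambda>x. real n \<le> f x \<and> ennreal (f x) \<le> y) F"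
      using assms(1,2) by (auto simp: filterlim_at_top intro: eventually_conj)
    then obtain x where "real n \<le> f x" "ennreal (f x) \<le> y"
      using assms(3) eventually_happens by blast
    then show ?thesis
      by (metis ennreal_leI ennreal_of_nat_eq_real_of_nat order_trans)
  qed
  then have "(SUP n. of_nat n) \<le> y"
    by (intro SUP_least)
  then show ?thesis
    by (simp add: ennreal_SUP_of_nat_eq_top top_unique)
qed

theorem mainTheorem2:
  fixes X :: "real ^ 'r ^ 'd" and p \<rho> :: real and P0 :: "(real ^ 'd) measure"
  assumes "CARD('r) < CARD('d)"
    and "transpose X ** X = mat 1"
    and "1 \<le> p" and "p < 2"
    and "\<rho> > 0"
    and "P0 \<in> Qp p"
  shows "phi p \<rho> P0 X = \<infinity>"
proof -
  have "rank (transpose X) \<noteq> CARD('d)"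
    using rank_bound[of "transpose X"] assms(1) by linarith
  then obtain v where v: "v \<noteq> 0" "transpose X *v v = 0"
    using matrix_nonfull_linear_equations_eq by blast
  have "0 < lpnorm p v"
    using v(1) by (rule lpnorm_pos)
  define K where "K = \<rho> powr p * (norm v)\<^sup>2 / lpnorm p v powr p"
  have "0 < K"
    using \<open>0 < lpnorm p v\<close> \<open>\<rho> > 0\<close> v(1) by (simp add: K_def)
  have "filterlim (\<lambda>t. K * t powr (2 - p)) at_top at_top"
    using \<open>0 < K\<close> \<open>p < 2\<close>
    by (intro filterlim_tendsto_pos_mult_at_top tendsto_const real_powr_at_top) auto
  moreover have "eventually (\<lambda>t. ennreal (K * t powr (2 - p)) \<le> phi p \<rho> P0 X) at_top"
    using eventually_ge_at_top[of "\<rho> / lpnorm p v"]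
  proof eventually_elim
    case (elim t)
    then have "\<rho> \<le> t * lpnorm p v"
      using \<open>0 < lpnorm p v\<close> by (simp add: pos_divide_le_eq)
    then show ?case
      unfolding K_def using assms(3,5,6) v by (intro phi_ge_powr_along_kernel) auto
  qed
  ultimately show ?thesis
    by (rule ennreal_eq_top_if_eventually_ge) simp
qed

end
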